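(* Let $k\in\mathbb N$, let $I$ be an interval of length $|I|=b$, and let $g\in C^k(I,\mathbb R)$ satisfy $\|g^{(m)}\|_\infty\le c_m$ for $m=0,\dots,k$, where $c_0<1$. Let $\epsilon>0$ and assume $k\ge1/\epsilon$ and $b\le c_0^{\epsilon}$. Then there are constants $\tilde C_m(\epsilon)\ge0$, $m=0,\dots,k$, depending only on $\epsilon$ and on $c_1,\dots,c_k$ (and increasing in the $c_j$), but not on $b$ or $c_0$, such that $$\|g^{(m)}\|_\infty\le c_0\,\tilde C_m(\epsilon)\,b^{-m},\qquad m=0,\dots,k.$$
   Context: $\|\cdot\|_\infty$ is the supremum norm over $I$. *)

theory Defs
  imports "HOL-Analysis.Analysis"
begin

text \<open>D is a C^k function on the interval I together with its derivatives:
  D 0 = g, D m = g^(m) (one-sided at endpoints of I), all continuous on I.\<close>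
definition Ck_on :: "nat \<Rightarrow> real set \<Rightarrow> (nat \<Rightarrow> real \<Rightarrow> real) \<Rightarrow> bool" where
  "Ck_on k I D \<longleftrightarrow>
     (\<forall>m<k. \<forall>x\<in>I. (D m has_real_derivative D (Suc m) x) (at x within I)) \<and>
     (\<forall>m\<le>k. continuous_on I (D m))"

end

theory Submission
  imports Defs
begin

text \<open>On an interval of length L where the j-th derivative is at most B at some point of each
  outer third, the mean value theorem between two such points gives a point where the (j+1)-th
  derivative is at most 6B/L. By induction, wherever |g| \<le> A on an interval of length L, each
  derivative g^(j) has a point where it is at most a constant times A/L^j. Inside I there is such
  an interval of length b/2, and a bound on g^(j+1) spreads the pointwise bound on g^(j) over I at
  the cost of b times that bound. Descending from j = k, where |g^(k)| \<le> c_k \<le> c_0 c_k b^-k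
  because b^k \<le> c_0^(k\<epsilon>) \<le> c_0, this yields the claim.\<close>

lemma Ck_on_subset: "Ck_on k I D \<Longrightarrow> J \<subseteq> I \<Longrightarrow> Ck_on k J D"
  unfolding Ck_on_def by (meson has_field_derivative_subset continuous_on_subset subsetD)

lemma Ck_on_mvt:
  assumes "Ck_on k {a..b} D" "m < k" "a \<le> b"
  shows "\<exists>y\<in>{a..b}. D m b - D m a = D (Suc m) y * (b - a)"
proof -
  have "(D m has_derivative (\<lambda>h. D (Suc m) x * h)) (at x within {a..b})" if "a \<le> x" "x \<le> b" for x
    using assms(1,2) that unfolding Ck_on_def has_field_derivative_def by auto
  from mvt_very_simple[OF assms(3) this] show ?thesis by auto
qed

lemma Ck_on_lipschitz:
  assumes "Ck_on k I D" "convex I" "m < k" "\<forall>y\<in>I. \<bar>D (Suc m) y\<bar> \<le> M" "x \<in> I" "y \<in> I"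
  shows "\<bar>D m x - D m y\<bar> \<le> M * \<bar>x - y\<bar>"
  using field_differentiable_bound[OF assms(2), of "D m" "D (Suc m)" M x y] assms
  unfolding Ck_on_def by auto

lemma power_le_of_le_powr:
  fixes b c \<epsilon> :: real
  assumes "0 < b" "b \<le> c powr \<epsilon>" "0 \<le> c" "c \<le> 1" "1 \<le> \<epsilon> * k"
  shows "b ^ k \<le> c"
proof -
  have "c \<noteq> 0" using assms(1,2) by auto
  have "b ^ k \<le> (c powr \<epsilon>) ^ k" using assms(1,2) by (simp add: power_mono)
  also have "\<dots> = c powr (\<epsilon> * k)" using \<open>c \<noteq> 0\<close> by (simp add: powr_power mult.commute)
  also have "\<dots> \<le> c powr 1" using assms(3-5) by (intro powr_mono') auto
  finally show ?thesis using \<open>c \<noteq> 0\<close> assms(3) by simp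
qed

lemma interval_long_segment:
  fixes I :: "real set"
  assumes "bounded I" "I \<noteq> {}" "0 < Sup I - Inf I"
  shows "\<exists>u\<in>I. \<exists>v\<in>I. (Sup I - Inf I) / 2 \<le> v - u"
proof -
  define b where "b = Sup I - Inf I"
  obtain u where "u \<in> I" "u < Inf I + b/4"
    using cInf_less_iff[OF assms(2) bounded_imp_bdd_below[OF assms(1)], of "Inf I + b/4"] assms(3)
    unfolding b_def by auto
  moreover obtain v where "v \<in> I" "Sup I - b/4 < v"
    using less_cSup_iff[OF assms(2) bounded_imp_bdd_above[OF assms(1)], of "Sup I - b/4"] assms(3)
    unfolding b_def by auto
  ultimately have "b / 2 \<le> v - u" unfolding b_def by (simp add: field_simps)
  with \<open>u \<in> I\<close> \<open>v \<in> I\<close> show ?thesis unfolding b_def by blast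
qed

lemma interval_dist_le_width:
  fixes I :: "real set"
  assumes "bounded I" "x \<in> I" "y \<in> I"
  shows "\<bar>x - y\<bar> \<le> Sup I - Inf I"
  using assms cInf_lower[of _ I] cSup_upper[of _ I] bounded_imp_bdd_below bounded_imp_bdd_above
  by (smt (verit))

primrec small_deriv_const :: "nat \<Rightarrow> real" where
  "small_deriv_const 0 = 1"
| "small_deriv_const (Suc j) = 2 * 3 ^ Suc j * small_deriv_const j"

lemma small_deriv_const_pos: "0 < small_deriv_const j"
  by (induction j) auto

lemma Ck_on_exists_small_derivative:
  assumes "Ck_on k {u..v} D" "j \<le> k" "u < v" "\<forall>x\<in>{u..v}. \<bar>D 0 x\<bar> \<le> A"
  shows "\<exists>\<xi>\<in>{u..v}. \<bar>D j \<xi>\<bar> \<le> small_deriv_const j * A / (v - u) ^ j"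
  using assms
proof (induction j arbitrary: u v)
  case 0
  then show ?case by auto
next
  case (Suc j)
  define L where "L = v - u"
  define B where "B = small_deriv_const j * A / (L/3) ^ j"
  have L: "0 < L" using Suc.prems L_def by auto
  have left: "{u..u + L/3} \<subseteq> {u..v}" and right: "{v - L/3..v} \<subseteq> {u..v}"
    using L L_def by (auto simp: field_simps)
  have "\<forall>x\<in>{u..u + L/3}. \<bar>D 0 x\<bar> \<le> A" using Suc.prems(4) left by blast
  then obtain x1 where x1: "x1 \<in> {u..u + L/3}" "\<bar>D j x1\<bar> \<le> B"
    using Suc.IH[OF Ck_on_subset[OF Suc.prems(1) left]] Suc.prems(2) L unfolding B_def by auto
  have "\<forall>x\<in>{v - L/3..v}. \<bar>D 0 x\<bar> \<le> A" using Suc.prems(4) right by blast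
  then obtain x2 where x2: "x2 \<in> {v - L/3..v}" "\<bar>D j x2\<bar> \<le> B"
    using Suc.IH[OF Ck_on_subset[OF Suc.prems(1) right]] Suc.prems(2) L unfolding B_def by auto
  have sep: "L/3 \<le> x2 - x1"
    using x1(1) x2(1) L_def unfolding atLeastAtMost_iff by linarith
  have inner: "{x1..x2} \<subseteq> {u..v}" using x1(1) x2(1) left right by auto
  obtain y where y: "y \<in> {x1..x2}" "D j x2 - D j x1 = D (Suc j) y * (x2 - x1)"
    using Ck_on_mvt[OF Ck_on_subset[OF Suc.prems(1) inner], of j] Suc.prems(2) sep L by auto
  have "\<bar>D (Suc j) y\<bar> * (L/3) \<le> \<bar>D (Suc j) y\<bar> * (x2 - x1)"
    using sep by (intro mult_left_mono) auto
  also have "\<dots> = \<bar>D j x2 - D j x1\<bar>" using y(2) sep L by (simp add: abs_mult)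
  also have "\<dots> \<le> 2 * B" using x1(2) x2(2) by linarith
  finally have "\<bar>D (Suc j) y\<bar> \<le> 2 * B / (L/3)" using L by (simp add: field_simps)
  also have "\<dots> = small_deriv_const (Suc j) * A / (v - u) ^ Suc j"
    unfolding B_def L_def using L L_def by (simp add: field_simps power_divide)
  finally show ?case using y(1) inner by auto
qed

lemma Ck_on_interval_exists_small_derivative:
  assumes "Ck_on k I D" "is_interval I" "bounded I" "I \<noteq> {}" "b = Sup I - Inf I" "0 < b"
    and "j \<le> k" "\<forall>x\<in>I. \<bar>D 0 x\<bar> \<le> A"
  shows "\<exists>\<xi>\<in>I. \<bar>D j \<xi>\<bar> \<le> A * (2 ^ j * small_deriv_const j) / b ^ j"
proof -
  obtain u v where uv: "u \<in> I" "v \<in> I" "b / 2 \<le> v - u"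
    using interval_long_segment[OF assms(3,4)] assms(5,6) by auto
  have sub: "{u..v} \<subseteq> I" using uv(1,2) assms(2) unfolding is_interval_1 by (meson atLeastAtMost_iff subsetI)
  have "0 \<le> A" using assms(8) uv(1) by (meson abs_ge_zero order_trans)
  have "u < v" using uv(3) assms(6) by linarith
  have "\<forall>x\<in>{u..v}. \<bar>D 0 x\<bar> \<le> A" using assms(8) sub by blast
  then obtain \<xi> where \<xi>: "\<xi> \<in> {u..v}" "\<bar>D j \<xi>\<bar> \<le> small_deriv_const j * A / (v - u) ^ j"
    using Ck_on_exists_small_derivative[OF Ck_on_subset[OF assms(1) sub] assms(7) \<open>u < v\<close>] by blast
  have "(b / 2) ^ j \<le> (v - u) ^ j" using uv(3) assms(6) by (intro power_mono) auto
  note \<xi>(2)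
  also have "small_deriv_const j * A / (v - u) ^ j \<le> small_deriv_const j * A / (b / 2) ^ j"
    using \<open>(b / 2) ^ j \<le> (v - u) ^ j\<close> assms(6) small_deriv_const_pos[of j] \<open>0 \<le> A\<close> \<open>u < v\<close>
    by (intro divide_left_mono) auto
  also have "\<dots> = A * (2 ^ j * small_deriv_const j) / b ^ j" by (simp add: power_divide)
  finally show ?thesis using \<xi>(1) sub by blast
qed

definition descent_const :: "nat \<Rightarrow> nat \<Rightarrow> real" where
  "descent_const k m = (\<Sum>i=m..<k. 2 ^ i * small_deriv_const i)"

lemma descent_const_self [simp]: "descent_const k k = 0"
  unfolding descent_const_def by simp

lemma descent_const_nonneg: "0 \<le> descent_const k m"
  unfolding descent_const_def by (intro sum_nonneg) (simp add: less_imp_le[OF small_deriv_const_pos])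

lemma descent_const_step:
  "m < k \<Longrightarrow> descent_const k m = 2 ^ m * small_deriv_const m + descent_const k (Suc m)"
  unfolding descent_const_def by (simp add: sum.atLeast_Suc_lessThan)

lemma Ck_on_derivative_bound:
  assumes "Ck_on k I D" "is_interval I" "bounded I" "b = Sup I - Inf I" "0 < b"
    and "\<forall>x\<in>I. \<bar>D 0 x\<bar> \<le> A" "\<forall>x\<in>I. \<bar>D k x\<bar> \<le> B" "m \<le> k" "x \<in> I"
  shows "\<bar>D m x\<bar> \<le> (A * descent_const k m + B * b ^ k) / b ^ m"
proof -
  have "\<forall>x\<in>I. \<bar>D m x\<bar> \<le> (A * descent_const k m + B * b ^ k) / b ^ m"
    using \<open>m \<le> k\<close>
  proof (induction m rule: inc_induct)
    case base
    show ?case using assms(5,7) by simp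
  next
    case (step j)
    define M where "M = (A * descent_const k (Suc j) + B * b ^ k) / b ^ Suc j"
    show ?case
    proof
      fix x assume "x \<in> I"
      then have "I \<noteq> {}" by blast
      then obtain \<xi> where \<xi>: "\<xi> \<in> I" "\<bar>D j \<xi>\<bar> \<le> A * (2 ^ j * small_deriv_const j) / b ^ j"
        using Ck_on_interval_exists_small_derivative[OF assms(1-3) _ assms(4,5) less_imp_le[OF step(2)] assms(6)]
        by blast
      have "0 \<le> M" using step(3) \<open>x \<in> I\<close> unfolding M_def by force
      have "\<bar>D j x - D j \<xi>\<bar> \<le> M * \<bar>x - \<xi>\<bar>"
        using Ck_on_lipschitz[OF assms(1) is_interval_convex[OF assms(2)] step(2)] step(3) \<open>x \<in> I\<close> \<xi>(1)
        unfolding M_def by blast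
      also have "\<dots> \<le> M * b"
        using interval_dist_le_width[OF assms(3) \<open>x \<in> I\<close> \<xi>(1)] assms(4) \<open>0 \<le> M\<close> by (simp add: mult_left_mono)
      also have "\<dots> = (A * descent_const k (Suc j) + B * b ^ k) / b ^ j"
        unfolding M_def using assms(5) by (simp add: field_simps)
      finally have "\<bar>D j x\<bar> \<le> A * (2 ^ j * small_deriv_const j) / b ^ j
          + (A * descent_const k (Suc j) + B * b ^ k) / b ^ j"
        using \<xi>(2) by linarith
      also have "\<dots> = (A * descent_const k j + B * b ^ k) / b ^ j"
        using step(2) by (simp add: descent_const_step add_divide_distrib distrib_left)
      finally show "\<bar>D j x\<bar> \<le> (A * descent_const k j + B * b ^ k) / b ^ j" .
    qed
  qed
  then show ?thesis using assms(9) by blast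
qed

text \<open>The parameter \<epsilon> is unused: k \<ge> 1/\<epsilon> only serves to give b^k \<le> c_0. Only c_k for k \<ge> 1
  enters, never c_0.\<close>
definition deriv_bound_const :: "nat \<Rightarrow> real \<Rightarrow> (nat \<Rightarrow> real) \<Rightarrow> nat \<Rightarrow> real" where
  "deriv_bound_const k \<epsilon> c m = descent_const k m + (if k = 0 then 0 else max 0 (c k))"

lemma deriv_bound_const_nonneg: "0 \<le> deriv_bound_const k \<epsilon> c m"
  using descent_const_nonneg[of k m] unfolding deriv_bound_const_def by simp

lemma deriv_bound_const_cong:
  "\<forall>j\<in>{1..k}. c j = c' j \<Longrightarrow> deriv_bound_const k \<epsilon> c m = deriv_bound_const k \<epsilon> c' m"
  unfolding deriv_bound_const_def by auto

lemma deriv_bound_const_mono: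
  assumes "\<forall>j\<in>{1..k}. c j \<le> c' j"
  shows "deriv_bound_const k \<epsilon> c m \<le> deriv_bound_const k \<epsilon> c' m"
proof (cases "k = 0")
  case False
  then have "max 0 (c k) \<le> max 0 (c' k)" using assms by (intro max.mono) auto
  then show ?thesis unfolding deriv_bound_const_def by simp
qed (simp add: deriv_bound_const_def)

lemma Ck_on_abs_le_deriv_bound_const:
  assumes "is_interval I" "bounded I" "b = Sup I - Inf I" "0 < b"
    and "Ck_on k I D" "\<forall>m\<le>k. \<forall>x\<in>I. \<bar>D m x\<bar> \<le> c m" "c 0 < 1"
    and "0 < \<epsilon>" "1 / \<epsilon> \<le> real k" "b \<le> c 0 powr \<epsilon>" "m \<le> k" "x \<in> I"
  shows "\<bar>D m x\<bar> \<le> c 0 * deriv_bound_const k \<epsilon> c m / b ^ m"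
proof -
  define B where "B = max 0 (c k)"
  have "0 \<le> c 0" using assms(6,12) by force
  have "1 \<le> \<epsilon> * real k" using assms(8,9) by (simp add: field_simps)
  then have "k \<noteq> 0" by (cases "k = 0") auto
  have "b ^ k \<le> c 0"
    using power_le_of_le_powr[OF assms(4,10) \<open>0 \<le> c 0\<close>] assms(7) \<open>1 \<le> \<epsilon> * real k\<close> by simp
  then have "B * b ^ k \<le> B * c 0" unfolding B_def by (intro mult_left_mono) auto
  have "\<forall>x\<in>I. \<bar>D k x\<bar> \<le> B" using assms(6) unfolding B_def by force
  then have "\<bar>D m x\<bar> \<le> (c 0 * descent_const k m + B * b ^ k) / b ^ m"
    using Ck_on_derivative_bound[OF assms(5,1,2,3,4)] assms(6,11,12) by force
  also have "\<dots> \<le> c 0 * (descent_const k m + B) / b ^ m"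
    using \<open>B * b ^ k \<le> B * c 0\<close> assms(4) by (intro divide_right_mono) (auto simp: algebra_simps)
  also have "\<dots> = c 0 * deriv_bound_const k \<epsilon> c m / b ^ m"
    using \<open>k \<noteq> 0\<close> unfolding deriv_bound_const_def B_def by simp
  finally show ?thesis .
qed

theorem lemma2p4:
  shows "\<exists>Ct :: nat \<Rightarrow> real \<Rightarrow> (nat \<Rightarrow> real) \<Rightarrow> nat \<Rightarrow> real.
    (\<forall>k \<epsilon> c c' m. (\<forall>j\<in>{1..k}. c j = c' j) \<longrightarrow> Ct k \<epsilon> c m = Ct k \<epsilon> c' m) \<and>
    (\<forall>k \<epsilon> c c' m. (\<forall>j\<in>{1..k}. c j \<le> c' j) \<longrightarrow> Ct k \<epsilon> c m \<le> Ct k \<epsilon> c' m) \<and>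
    (\<forall>k \<epsilon> c m. 0 \<le> Ct k \<epsilon> c m) \<and>
    (\<forall>(k::nat) (\<epsilon>::real) (c::nat \<Rightarrow> real) (I::real set) (b::real) (D::nat \<Rightarrow> real \<Rightarrow> real).
       is_interval I \<and> bounded I \<and> I \<noteq> {} \<and> b = Sup I - Inf I \<and> 0 < b \<and>
       Ck_on k I D \<and> (\<forall>m\<le>k. \<forall>x\<in>I. \<bar>D m x\<bar> \<le> c m) \<and> c 0 < 1 \<and>
       0 < \<epsilon> \<and> real k \<ge> 1 / \<epsilon> \<and> b \<le> c 0 powr \<epsilon>
       \<longrightarrow> (\<forall>m\<le>k. \<forall>x\<in>I. \<bar>D m x\<bar> \<le> c 0 * Ct k \<epsilon> c m / b ^ m))"
proof (intro exI[of _ deriv_bound_const] conjI allI impI ballI)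
  fix k m :: nat and \<epsilon> b :: real and c :: "nat \<Rightarrow> real" and I :: "real set" and D x
  assume "is_interval I \<and> bounded I \<and> I \<noteq> {} \<and> b = Sup I - Inf I \<and> 0 < b \<and>
       Ck_on k I D \<and> (\<forall>m\<le>k. \<forall>x\<in>I. \<bar>D m x\<bar> \<le> c m) \<and> c 0 < 1 \<and>
       0 < \<epsilon> \<and> real k \<ge> 1 / \<epsilon> \<and> b \<le> c 0 powr \<epsilon>" "m \<le> k" "x \<in> I"
  then show "\<bar>D m x\<bar> \<le> c 0 * deriv_bound_const k \<epsilon> c m / b ^ m"
    by (intro Ck_on_abs_le_deriv_bound_const) simp_all
qed (blast intro: deriv_bound_const_cong deriv_bound_const_mono deriv_bound_const_nonneg)+

end
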